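(* Let $\varphi = \varphi(a,n): A \times \mathbb{N}\to \mathbb{N}$ be a predicate of $\mathbf{PR}$ (i.e. $\mathrm{sign}\circ\varphi = \varphi$). If $\mathbf{PR}$ derives $\varphi(a,0) = \mathrm{true}_A(a)$, i.e. $\varphi\circ(\mathrm{id}_A,0\circ\Pi_A) = \mathrm{true}_A$, and derives $[\varphi(a,n) \Rightarrow \varphi(a,\mathrm{s}\,n)] = \mathrm{true}_{A\times\mathbb{N}}$, then $\mathbf{PR}$ derives $\varphi = \mathrm{true}_{A\times\mathbb{N}}$.
   Context: $\mathbf{PR}$ is the formal (syntactic) category defined as follows. Objects: generated from a terminal object $\mathbb{1}$ and a natural numbers object $\mathbb{N}$ by binary products. Maps: generated from $0: \mathbb{1} \to \mathbb{N}$, $\mathrm{s}: \mathbb{N}\to\mathbb{N}$, identities, terminal maps $\Pi_A$, projections $\ell,\mathrm{r}$, by composition, induced maps $(f,g)$ and iteration $f\mapsto f^\S: A\times\mathbb{N}\to A$ of endomaps; map equality is the least congruence containing the category axioms, uniqueness of maps into $\mathbb{1}$, $\ell\circ(f,g)=f$, $\mathrm{r}\circ(f,g)=g$, $(\ell h,\mathrm{r} h)=h$, $f^\S(a,0)=a$, $f^\S(a,\mathrm{s}n)=f(f^\S(a,n))$, and Freyd's uniqueness rule for initialised iterates ($h(a,0)=f(a)$ and $h(a,\mathrm{s}n)=g(h(a,n))$ imply $h=g^\S\circ(f\times\mathbb{N})$). Logic on $\mathbb{N}$: $\mathrm{true}=1=\mathrm{s}0$, $\mathrm{true}_A = 1\circ\Pi_A$;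 $\neg 0=1$, $\neg\mathrm{s}n=0$; $\mathrm{sign}=\neg\neg$; $x\vee y=\mathrm{sign}(x+y)$; $[x\Rightarrow y]=\neg x\vee y$. *)

theory Defs
  imports Main
begin

datatype obj = One | NN | Prod obj obj

datatype tm =
    Zero
  | Succ
  | Id obj
  | Bang obj
  | Fst obj obj
  | Snd obj obj
  | Comp tm tm
  | Pair tm tm
  | Iter tm

inductive typed :: "tm \<Rightarrow> obj \<Rightarrow> obj \<Rightarrow> bool" where
  t_zero: "typed Zero One NN"
| t_succ: "typed Succ NN NN"
| t_id: "typed (Id A) A A"
| t_bang: "typed (Bang A) A One"
| t_fst: "typed (Fst A B) (Prod A B) A"
| t_snd: "typed (Snd A B) (Prod A B) B"
| t_comp: "typed f A B \<Longrightarrow> typed g B C \<Longrightarrow> typed (Comp g f) A C"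
| t_pair: "typed f A B \<Longrightarrow> typed g A C \<Longrightarrow> typed (Pair f g) A (Prod B C)"
| t_iter: "typed f A A \<Longrightarrow> typed (Iter f) (Prod A NN) A"

definition zeroA :: "obj \<Rightarrow> tm" where
  "zeroA A = Pair (Id A) (Comp Zero (Bang A))"

definition succA :: "obj \<Rightarrow> tm" where
  "succA A = Pair (Fst A NN) (Comp Succ (Snd A NN))"

inductive peq :: "obj \<Rightarrow> obj \<Rightarrow> tm \<Rightarrow> tm \<Rightarrow> bool" where
  e_refl: "typed f A B \<Longrightarrow> peq A B f f"
| e_sym: "peq A B f g \<Longrightarrow> peq A B g f"
| e_trans: "peq A B f g \<Longrightarrow> peq A B g h \<Longrightarrow> peq A B f h"
| e_comp: "peq A B f f' \<Longrightarrow> peq B C g g' \<Longrightarrow> peq A C (Comp g f) (Comp g' f')"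
| e_pair: "peq A B f f' \<Longrightarrow> peq A C g g' \<Longrightarrow> peq A (Prod B C) (Pair f g) (Pair f' g')"
| e_iter: "peq A A f f' \<Longrightarrow> peq (Prod A NN) A (Iter f) (Iter f')"
| e_idl: "typed f A B \<Longrightarrow> peq A B (Comp (Id B) f) f"
| e_idr: "typed f A B \<Longrightarrow> peq A B (Comp f (Id A)) f"
| e_assoc: "typed f A B \<Longrightarrow> typed g B C \<Longrightarrow> typed h C D \<Longrightarrow>
     peq A D (Comp h (Comp g f)) (Comp (Comp h g) f)"
| e_term: "typed f A One \<Longrightarrow> peq A One f (Bang A)"
| e_fst: "typed f A B \<Longrightarrow> typed g A C \<Longrightarrow> peq A B (Comp (Fst B C) (Pair f g)) f"
| e_snd: "typed f A B \<Longrightarrow> typed g A C \<Longrightarrow> peq A C (Comp (Snd B C) (Pair f g)) g"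
| e_pair_eta: "typed h A (Prod B C) \<Longrightarrow>
     peq A (Prod B C) (Pair (Comp (Fst B C) h) (Comp (Snd B C) h)) h"
| e_iter0: "typed f A A \<Longrightarrow> peq A A (Comp (Iter f) (zeroA A)) (Id A)"
| e_iterS: "typed f A A \<Longrightarrow> peq (Prod A NN) A (Comp (Iter f) (succA A)) (Comp f (Iter f))"
| e_freyd: "typed h (Prod A NN) B \<Longrightarrow> typed f A B \<Longrightarrow> typed g B B \<Longrightarrow>
     peq A B (Comp h (zeroA A)) f \<Longrightarrow>
     peq (Prod A NN) B (Comp h (succA A)) (Comp g h) \<Longrightarrow>
     peq (Prod A NN) B h (Comp (Iter g) (Pair (Comp f (Fst A NN)) (Snd A NN)))"

definition ptrue :: tm where "ptrue = Comp Succ Zero"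
definition ptrueA :: "obj \<Rightarrow> tm" where "ptrueA A = Comp ptrue (Bang A)"

(* neg n = g^S(1, n) with g = 0 o Pi_N, so neg 0 = 1, neg (s n) = 0 *)
definition pneg :: tm where
  "pneg = Comp (Iter (Comp Zero (Bang NN))) (Pair (ptrueA NN) (Id NN))"
definition padd :: tm where "padd = Iter Succ"
definition psign :: tm where "psign = Comp pneg pneg"
definition por :: tm where "por = Comp psign padd"
definition pimp :: tm where "pimp = Comp por (Pair (Comp pneg (Fst NN NN)) (Snd NN NN))"

end

theory Submission
  imports Defs
begin

text \<open>Both \<open>\<phi>\<close> and \<open>true\<close> satisfy the same recursion \<open>h (a, 0) = true\<close>,
  \<open>h (a, s n) = [(\<phi> (a, n) \<or> \<not> h (a, n)) \<Rightarrow> \<phi> (a, s n)]\<close>: for \<open>h = \<phi>\<close> the guard is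
  excluded middle, so the right-hand side is \<open>\<phi> (a, s n)\<close> because \<open>\<phi>\<close> is a predicate; for
  \<open>h = true\<close> it is the hypothesis \<open>[\<phi> (a, n) \<Rightarrow> \<phi> (a, s n)]\<close>. Freyd's rule, applied to
  the graphs \<open>(id, h)\<close>, makes such a recursion determine \<open>h\<close>. The arithmetic identities in one
  variable (\<open>0 + y = y\<close>, \<open>\<not> (y + \<not> y) = 0\<close>) are proved for the generic element
  \<open>r : 1 \<times> N \<rightarrow> N\<close> by comparing values at \<open>0\<close> and \<open>s n\<close>, and then substituted.\<close>

declare typed.intros [intro]
declare e_trans [trans]

abbreviation pzeroA :: "obj \<Rightarrow> tm" where "pzeroA A \<equiv> Comp Zero (Bang A)"
abbreviation pplus :: "tm \<Rightarrow> tm \<Rightarrow> tm" where "pplus f g \<equiv> Comp padd (Pair f g)"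
abbreviation graph :: "obj \<Rightarrow> tm \<Rightarrow> tm" where "graph A f \<equiv> Pair (Id A) f"

lemma typed_ptrue [intro]: "typed ptrue One NN" unfolding ptrue_def by blast
lemma typed_ptrueA [intro]: "typed (ptrueA A) A NN" unfolding ptrueA_def by blast
lemma typed_zeroA [intro]: "typed (zeroA A) A (Prod A NN)" unfolding zeroA_def by blast
lemma typed_succA [intro]: "typed (succA A) (Prod A NN) (Prod A NN)" unfolding succA_def by blast
lemma typed_pneg [intro]: "typed pneg NN NN" unfolding pneg_def by blast
lemma typed_padd [intro]: "typed padd (Prod NN NN) NN" unfolding padd_def by blast
lemma typed_psign [intro]: "typed psign NN NN" unfolding psign_def by blast
lemma typed_por [intro]: "typed por (Prod NN NN) NN" unfolding por_def by blast

lemma peq_typed: "peq A B f g \<Longrightarrow> typed f A B \<and> typed g A B"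
  by (induction rule: peq.induct) auto

lemma peq_fun_cong: "peq B C g g' \<Longrightarrow> typed f A B \<Longrightarrow> peq A C (Comp g f) (Comp g' f)"
  by (rule e_comp, rule e_refl)

lemma peq_arg_cong: "typed g B C \<Longrightarrow> peq A B f f' \<Longrightarrow> peq A C (Comp g f) (Comp g f')"
  by (rule e_comp, assumption, rule e_refl)

lemma peq_pair_cong1: "peq A B f f' \<Longrightarrow> typed g A C \<Longrightarrow> peq A (Prod B C) (Pair f g) (Pair f' g)"
  by (rule e_pair, assumption, rule e_refl)

lemma peq_pair_cong2: "typed f A B \<Longrightarrow> peq A C g g' \<Longrightarrow> peq A (Prod B C) (Pair f g) (Pair f g')"
  by (rule e_pair, rule e_refl)

lemma peq_assoc: "typed f A B \<Longrightarrow> typed g B C \<Longrightarrow> typed h C D \<Longrightarrow>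
    peq A D (Comp (Comp h g) f) (Comp h (Comp g f))"
  by (rule e_sym, rule e_assoc)

lemma peq_pair_comp:
  assumes "typed f B C" "typed g B D" "typed h A B"
  shows "peq A (Prod C D) (Comp (Pair f g) h) (Pair (Comp f h) (Comp g h))"
proof -
  have "peq A (Prod C D) (Comp (Pair f g) h)
      (Pair (Comp (Fst C D) (Comp (Pair f g) h)) (Comp (Snd C D) (Comp (Pair f g) h)))"
    by (rule e_sym, rule e_pair_eta) (use assms in blast)
  also have "peq A (Prod C D) \<dots> (Pair (Comp (Comp (Fst C D) (Pair f g)) h) (Comp (Comp (Snd C D) (Pair f g)) h))"
    by (rule e_pair; rule e_assoc) (use assms in blast)+
  also have "peq A (Prod C D) \<dots> (Pair (Comp f h) (Comp g h))"
    by (rule e_pair; rule peq_fun_cong) (use assms in \<open>blast intro: e_fst e_snd\<close>)+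
  finally show ?thesis .
qed

lemma peq_bang_comp: "typed h A B \<Longrightarrow> peq A One (Comp (Bang B) h) (Bang A)"
  by (rule e_term) blast

lemma peq_const_comp:
  assumes "typed c One C" "typed h A B"
  shows "peq A C (Comp (Comp c (Bang B)) h) (Comp c (Bang A))"
proof -
  have "peq A C (Comp (Comp c (Bang B)) h) (Comp c (Comp (Bang B) h))"
    by (rule peq_assoc) (use assms in blast)+
  also have "peq A C \<dots> (Comp c (Bang A))"
    by (rule peq_arg_cong, rule assms, rule peq_bang_comp, rule assms)
  finally show ?thesis .
qed

lemma peq_ptrueA_comp: "typed h A B \<Longrightarrow> peq A NN (Comp (ptrueA B) h) (ptrueA A)"
  unfolding ptrueA_def by (rule peq_const_comp) blast+

lemma peq_pzeroA_comp: "typed h A B \<Longrightarrow> peq A NN (Comp (pzeroA B) h) (pzeroA A)"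
  by (rule peq_const_comp) blast+

lemma peq_fst_graph_comp:
  "typed m A C \<Longrightarrow> typed w A D \<Longrightarrow> peq A C (Comp (Comp m (Fst A D)) (graph A w)) m"
proof -
  assume m: "typed m A C" and w: "typed w A D"
  have "peq A C (Comp (Comp m (Fst A D)) (graph A w)) (Comp m (Comp (Fst A D) (graph A w)))"
    by (rule peq_assoc) (use m w in blast)+
  also have "peq A C \<dots> (Comp m (Id A))" by (rule peq_arg_cong, rule m, rule e_fst) (use w in blast)+
  also have "peq A C \<dots> m" by (rule e_idr, rule m)
  finally show ?thesis .
qed

lemma peq_snd_graph_comp:
  "typed m D C \<Longrightarrow> typed w A D \<Longrightarrow> peq A C (Comp (Comp m (Snd A D)) (graph A w)) (Comp m w)"
proof -
  assume m: "typed m D C" and w: "typed w A D"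
  have "peq A C (Comp (Comp m (Snd A D)) (graph A w)) (Comp m (Comp (Snd A D) (graph A w)))"
    by (rule peq_assoc) (use m w in blast)+
  also have "peq A C \<dots> (Comp m w)" by (rule peq_arg_cong, rule m, rule e_snd) (use w in blast)+
  finally show ?thesis .
qed

lemma peq_graph_comp:
  "typed w A D \<Longrightarrow> typed u B A \<Longrightarrow> peq B (Prod A D) (Comp (graph A w) u) (Pair u (Comp w u))"
proof -
  assume w: "typed w A D" and u: "typed u B A"
  have "peq B (Prod A D) (Comp (graph A w) u) (Pair (Comp (Id A) u) (Comp w u))"
    by (rule peq_pair_comp) (use w u in blast)+
  also have "peq B (Prod A D) \<dots> (Pair u (Comp w u))"
    by (rule peq_pair_cong1, rule e_idl, rule u) (use w u in blast)
  finally show ?thesis .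
qed

lemma peq_graph_snd:
  "peq A (Prod A D) (graph A w) (graph A w') \<Longrightarrow> typed w A D \<Longrightarrow> typed w' A D \<Longrightarrow> peq A D w w'"
proof -
  assume eq: "peq A (Prod A D) (graph A w) (graph A w')" and w: "typed w A D" and w': "typed w' A D"
  have "peq A D w (Comp (Snd A D) (graph A w))" by (rule e_sym, rule e_snd) (use w in blast)+
  also have "peq A D \<dots> (Comp (Snd A D) (graph A w'))" by (rule peq_arg_cong, blast, rule eq)
  also have "peq A D \<dots> w'" by (rule e_snd) (use w' in blast)+
  finally show ?thesis .
qed

lemma peq_zeroA_comp:
  "typed x B A \<Longrightarrow> peq B (Prod A NN) (Comp (zeroA A) x) (Pair x (pzeroA B))"
proof -
  assume x: "typed x B A"
  have "peq B (Prod A NN) (Comp (zeroA A) x) (Pair (Comp (Id A) x) (Comp (pzeroA A) x))"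
    unfolding zeroA_def by (rule peq_pair_comp) (use x in blast)+
  also have "peq B (Prod A NN) \<dots> (Pair x (pzeroA B))"
    by (rule e_pair, rule e_idl, rule x, rule peq_pzeroA_comp, rule x)
  finally show ?thesis .
qed

lemma peq_succA_comp:
  "typed x B A \<Longrightarrow> typed n B NN \<Longrightarrow> peq B (Prod A NN) (Comp (succA A) (Pair x n)) (Pair x (Comp Succ n))"
proof -
  assume x: "typed x B A" and n: "typed n B NN"
  have "peq B (Prod A NN) (Comp (succA A) (Pair x n))
      (Pair (Comp (Fst A NN) (Pair x n)) (Comp (Comp Succ (Snd A NN)) (Pair x n)))"
    unfolding succA_def by (rule peq_pair_comp) (use x n in blast)+
  also have "peq B (Prod A NN) \<dots> (Pair x (Comp Succ (Comp (Snd A NN) (Pair x n))))"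
    by (rule e_pair, rule e_fst, rule x, rule n, rule peq_assoc) (use x n in blast)+
  also have "peq B (Prod A NN) \<dots> (Pair x (Comp Succ n))"
    by (rule peq_pair_cong2, rule x, rule peq_arg_cong, blast, rule e_snd, rule x, rule n)
  finally show ?thesis .
qed

lemma peq_iter_zero:
  "typed f A A \<Longrightarrow> typed x B A \<Longrightarrow> peq B A (Comp (Iter f) (Pair x (pzeroA B))) x"
proof -
  assume f: "typed f A A" and x: "typed x B A"
  have "peq B A (Comp (Iter f) (Pair x (pzeroA B))) (Comp (Iter f) (Comp (zeroA A) x))"
    by (rule peq_arg_cong, use f in blast, rule e_sym, rule peq_zeroA_comp, rule x)
  also have "peq B A \<dots> (Comp (Comp (Iter f) (zeroA A)) x)"
    by (rule e_assoc) (use f x in blast)+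
  also have "peq B A \<dots> (Comp (Id A) x)" by (rule peq_fun_cong, rule e_iter0, rule f, rule x)
  also have "peq B A \<dots> x" by (rule e_idl, rule x)
  finally show ?thesis .
qed

lemma peq_iter_succ:
  "typed f A A \<Longrightarrow> typed x B A \<Longrightarrow> typed n B NN \<Longrightarrow>
    peq B A (Comp (Iter f) (Pair x (Comp Succ n))) (Comp f (Comp (Iter f) (Pair x n)))"
proof -
  assume f: "typed f A A" and x: "typed x B A" and n: "typed n B NN"
  have "peq B A (Comp (Iter f) (Pair x (Comp Succ n))) (Comp (Iter f) (Comp (succA A) (Pair x n)))"
    by (rule peq_arg_cong, use f in blast, rule e_sym, rule peq_succA_comp, rule x, rule n)
  also have "peq B A \<dots> (Comp (Comp (Iter f) (succA A)) (Pair x n))"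
    by (rule e_assoc) (use f x n in blast)+
  also have "peq B A \<dots> (Comp (Comp f (Iter f)) (Pair x n))"
    by (rule peq_fun_cong, rule e_iterS, rule f) (use x n in blast)
  also have "peq B A \<dots> (Comp f (Comp (Iter f) (Pair x n)))"
    by (rule peq_assoc) (use f x n in blast)+
  finally show ?thesis .
qed

lemma peq_iterate_unique:
  assumes h: "typed h (Prod A NN) B" and k: "typed k (Prod A NN) B" and g: "typed g B B"
    and zero: "peq A B (Comp h (zeroA A)) (Comp k (zeroA A))"
    and h_succ: "peq (Prod A NN) B (Comp h (succA A)) (Comp g h)"
    and k_succ: "peq (Prod A NN) B (Comp k (succA A)) (Comp g k)"
  shows "peq (Prod A NN) B h k"
proof -
  let ?f = "Comp k (zeroA A)"
  have f: "typed ?f A B" using k by blast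
  have "peq (Prod A NN) B h (Comp (Iter g) (Pair (Comp ?f (Fst A NN)) (Snd A NN)))"
    using h f g zero h_succ by (rule e_freyd)
  moreover have "peq (Prod A NN) B k (Comp (Iter g) (Pair (Comp ?f (Fst A NN)) (Snd A NN)))"
    using k f g e_refl[OF f] k_succ by (rule e_freyd)
  ultimately show ?thesis by (blast intro: e_sym e_trans)
qed

lemma peq_primrec_unique:
  assumes h: "typed h (Prod A NN) B" and k: "typed k (Prod A NN) B"
    and e: "typed e (Prod (Prod A NN) B) B"
    and zero: "peq A B (Comp h (zeroA A)) (Comp k (zeroA A))"
    and h_succ: "peq (Prod A NN) B (Comp h (succA A)) (Comp e (graph (Prod A NN) h))"
    and k_succ: "peq (Prod A NN) B (Comp k (succA A)) (Comp e (graph (Prod A NN) k))"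
  shows "peq (Prod A NN) B h k"
proof -
  let ?X = "Prod A NN"
  \<comment> \<open>both graphs iterate the endomap \<open>((a, n), w) \<mapsto> ((a, s n), e ((a, n), w))\<close>\<close>
  let ?g = "Pair (Comp (succA A) (Fst ?X B)) e"
  have graph_succ: "peq ?X (Prod ?X B) (Comp (graph ?X w) (succA A)) (Comp ?g (graph ?X w))"
    if w: "typed w ?X B" and w_succ: "peq ?X B (Comp w (succA A)) (Comp e (graph ?X w))" for w
  proof -
    have "peq ?X (Prod ?X B) (Comp (graph ?X w) (succA A)) (Pair (succA A) (Comp e (graph ?X w)))"
      by (rule e_trans, rule peq_graph_comp, rule w, blast, rule peq_pair_cong2, blast, rule w_succ)
    also have "peq ?X (Prod ?X B) \<dots> (Comp ?g (graph ?X w))"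
      by (rule e_sym, rule e_trans, rule peq_pair_comp, (use w e in blast)+,
          rule peq_pair_cong1, rule peq_fst_graph_comp, (use w e in blast)+)
    finally show ?thesis .
  qed
  have "peq ?X (Prod ?X B) (graph ?X h) (graph ?X k)"
  proof (rule peq_iterate_unique[where g = ?g])
    show "peq A (Prod ?X B) (Comp (graph ?X h) (zeroA A)) (Comp (graph ?X k) (zeroA A))"
      by (rule e_trans, rule peq_graph_comp, rule h, blast, rule e_sym, rule e_trans,
          rule peq_graph_comp, rule k, blast, rule peq_pair_cong2, blast, rule e_sym, rule zero)
  qed (use h k e graph_succ h_succ k_succ in \<open>blast+\<close>)
  then show ?thesis using h k by (rule peq_graph_snd)
qed

lemma peq_pplus_comp:
  "typed a B NN \<Longrightarrow> typed b B NN \<Longrightarrow> typed u A B \<Longrightarrow>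
    peq A NN (Comp (pplus a b) u) (pplus (Comp a u) (Comp b u))"
proof -
  assume a: "typed a B NN" and b: "typed b B NN" and u: "typed u A B"
  have "peq A NN (Comp (pplus a b) u) (Comp padd (Comp (Pair a b) u))"
    by (rule peq_assoc) (use a b u in blast)+
  also have "peq A NN \<dots> (pplus (Comp a u) (Comp b u))"
    by (rule peq_arg_cong, blast, rule peq_pair_comp, rule a, rule b, rule u)
  finally show ?thesis .
qed

lemma pplus_cong: "peq A NN a a' \<Longrightarrow> peq A NN b b' \<Longrightarrow> peq A NN (pplus a b) (pplus a' b')"
  by (rule peq_arg_cong, blast, rule e_pair)

lemma pplus_zero: "typed x A NN \<Longrightarrow> peq A NN (pplus x (pzeroA A)) x"
  unfolding padd_def by (rule peq_iter_zero) blast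

lemma pplus_succ: "typed x A NN \<Longrightarrow> typed n A NN \<Longrightarrow>
    peq A NN (pplus x (Comp Succ n)) (Comp Succ (pplus x n))"
  unfolding padd_def by (rule peq_iter_succ) blast

lemma peq_snd_zeroA: "peq A NN (Comp (Snd A NN) (zeroA A)) (pzeroA A)"
  unfolding zeroA_def by (rule e_snd) blast+

lemma peq_snd_succA: "peq (Prod A NN) NN (Comp (Snd A NN) (succA A)) (Comp Succ (Snd A NN))"
  unfolding succA_def by (rule e_snd) blast+

lemma pplus_zero_left_generic:
  "peq (Prod One NN) NN (pplus (pzeroA (Prod One NN)) (Snd One NN)) (Snd One NN)"
proof (rule peq_iterate_unique[where g = Succ])
  let ?P = "Prod One NN"
  have "peq One NN (Comp (pplus (pzeroA ?P) (Snd One NN)) (zeroA One))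
      (pplus (Comp (pzeroA ?P) (zeroA One)) (Comp (Snd One NN) (zeroA One)))"
    by (rule peq_pplus_comp) blast+
  also have "peq One NN \<dots> (pplus (pzeroA One) (pzeroA One))"
    by (rule pplus_cong, rule peq_pzeroA_comp, blast, rule peq_snd_zeroA)
  also have "peq One NN \<dots> (Comp (Snd One NN) (zeroA One))"
    by (rule e_trans, rule pplus_zero, blast, rule e_sym, rule peq_snd_zeroA)
  finally show "peq One NN (Comp (pplus (pzeroA ?P) (Snd One NN)) (zeroA One)) (Comp (Snd One NN) (zeroA One))" .
  have "peq ?P NN (Comp (pplus (pzeroA ?P) (Snd One NN)) (succA One))
      (pplus (Comp (pzeroA ?P) (succA One)) (Comp (Snd One NN) (succA One)))"
    by (rule peq_pplus_comp) blast+
  also have "peq ?P NN \<dots> (pplus (pzeroA ?P) (Comp Succ (Snd One NN)))"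
    by (rule pplus_cong, rule peq_pzeroA_comp, blast, rule peq_snd_succA)
  also have "peq ?P NN \<dots> (Comp Succ (pplus (pzeroA ?P) (Snd One NN)))" by (rule pplus_succ) blast+
  finally show "peq ?P NN (Comp (pplus (pzeroA ?P) (Snd One NN)) (succA One)) (Comp Succ (pplus (pzeroA ?P) (Snd One NN)))" .
qed (blast | rule peq_snd_succA)+

lemma peq_snd_bang_pair: "typed p A NN \<Longrightarrow> peq A NN (Comp (Snd One NN) (Pair (Bang A) p)) p"
  by (rule e_snd) blast+

lemma pplus_zero_left: "typed y A NN \<Longrightarrow> peq A NN (pplus (pzeroA A) y) y"
proof -
  assume y: "typed y A NN"
  let ?P = "Prod One NN" and ?u = "Pair (Bang A) y"
  have u: "typed ?u A ?P" using y by blast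
  have "peq A NN (pplus (pzeroA A) y) (pplus (Comp (pzeroA ?P) ?u) (Comp (Snd One NN) ?u))"
    by (rule peq_arg_cong, blast, rule e_sym, rule e_pair, rule peq_pzeroA_comp, rule u,
        rule peq_snd_bang_pair, rule y)
  also have "peq A NN \<dots> (Comp (pplus (pzeroA ?P) (Snd One NN)) ?u)"
    by (rule e_sym, rule peq_pplus_comp) (use u in blast)+
  also have "peq A NN \<dots> (Comp (Snd One NN) ?u)"
    by (rule peq_fun_cong, rule pplus_zero_left_generic, rule u)
  also have "peq A NN \<dots> y" by (rule peq_snd_bang_pair, rule y)
  finally show ?thesis .
qed

lemma ptrueA_eq: "peq A NN (ptrueA A) (Comp Succ (pzeroA A))"
  unfolding ptrueA_def ptrue_def by (rule peq_assoc) blast+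

lemma pneg_comp:
  "typed n A NN \<Longrightarrow> peq A NN (Comp pneg n) (Comp (Iter (pzeroA NN)) (Pair (ptrueA A) n))"
proof -
  assume n: "typed n A NN"
  have "peq A NN (Comp pneg n) (Comp (Iter (pzeroA NN)) (Comp (Pair (ptrueA NN) (Id NN)) n))"
    unfolding pneg_def by (rule peq_assoc) (use n in blast)+
  also have "peq A NN \<dots> (Comp (Iter (pzeroA NN)) (Pair (Comp (ptrueA NN) n) (Comp (Id NN) n)))"
    by (rule peq_arg_cong, blast, rule peq_pair_comp) (use n in blast)+
  also have "peq A NN \<dots> (Comp (Iter (pzeroA NN)) (Pair (ptrueA A) n))"
    by (rule peq_arg_cong, blast, rule e_pair, rule peq_ptrueA_comp, rule n, rule e_idl, rule n)
  finally show ?thesis .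
qed

lemma pneg_zero: "peq A NN (Comp pneg (pzeroA A)) (ptrueA A)"
  by (rule e_trans, rule pneg_comp, blast, rule peq_iter_zero) blast+

lemma pneg_succ: "typed n A NN \<Longrightarrow> peq A NN (Comp pneg (Comp Succ n)) (pzeroA A)"
proof -
  assume n: "typed n A NN"
  have "peq A NN (Comp pneg (Comp Succ n)) (Comp (Iter (pzeroA NN)) (Pair (ptrueA A) (Comp Succ n)))"
    by (rule pneg_comp) (use n in blast)
  also have "peq A NN \<dots> (Comp (pzeroA NN) (Comp (Iter (pzeroA NN)) (Pair (ptrueA A) n)))"
    by (rule peq_iter_succ) (use n in blast)+
  also have "peq A NN \<dots> (pzeroA A)" by (rule peq_pzeroA_comp) (use n in blast)
  finally show ?thesis .
qed

lemma pneg_ptrueA: "peq A NN (Comp pneg (ptrueA A)) (pzeroA A)"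
  by (rule e_trans, rule peq_arg_cong, blast, rule ptrueA_eq, rule pneg_succ) blast

lemma pimp_eq:
  "typed p A NN \<Longrightarrow> typed q A NN \<Longrightarrow> peq A NN (Comp pimp (Pair p q)) (Comp psign (pplus (Comp pneg p) q))"
proof -
  assume p: "typed p A NN" and q: "typed q A NN"
  have "peq A NN (Comp pimp (Pair p q)) (Comp por (Comp (Pair (Comp pneg (Fst NN NN)) (Snd NN NN)) (Pair p q)))"
    unfolding pimp_def by (rule peq_assoc) (use p q in blast)+
  also have "peq A NN \<dots> (Comp por (Pair (Comp (Comp pneg (Fst NN NN)) (Pair p q)) (Comp (Snd NN NN) (Pair p q))))"
    by (rule peq_arg_cong, blast, rule peq_pair_comp) (use p q in blast)+
  also have "peq A NN \<dots> (Comp por (Pair (Comp pneg (Comp (Fst NN NN) (Pair p q))) q))"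
    by (rule peq_arg_cong, blast, rule e_pair, rule peq_assoc, (use p q in blast)+, rule e_snd, rule p, rule q)
  also have "peq A NN \<dots> (Comp por (Pair (Comp pneg p) q))"
    by (rule peq_arg_cong, blast, rule peq_pair_cong1, rule peq_arg_cong, blast, rule e_fst, rule p, rule q, rule q)
  also have "peq A NN \<dots> (Comp psign (pplus (Comp pneg p) q))"
    unfolding por_def by (rule peq_assoc) (use p q in blast)+
  finally show ?thesis .
qed

lemma peq_NN_cases:
  assumes h: "typed h (Prod A NN) B" and k: "typed k (Prod A NN) B"
    and zero: "peq A B (Comp h (zeroA A)) (Comp k (zeroA A))"
    and succ: "peq (Prod A NN) B (Comp h (succA A)) (Comp k (succA A))"
  shows "peq (Prod A NN) B h k"
proof (rule peq_primrec_unique[where e = "Comp (Comp h (succA A)) (Fst (Prod A NN) B)"])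
  show "peq (Prod A NN) B (Comp h (succA A)) (Comp (Comp (Comp h (succA A)) (Fst (Prod A NN) B)) (graph (Prod A NN) h))"
    by (rule e_sym, rule peq_fst_graph_comp) (use h in blast)+
  show "peq (Prod A NN) B (Comp k (succA A)) (Comp (Comp (Comp h (succA A)) (Fst (Prod A NN) B)) (graph (Prod A NN) k))"
    by (rule e_sym, rule e_trans, rule peq_fst_graph_comp, (use h k in blast)+, rule succ)
qed (use h k zero in blast)+

lemma pneg_pplus_pneg_comp:
  assumes a: "typed a B NN" and u: "typed u A B"
  shows "peq A NN (Comp (Comp pneg (pplus a (Comp pneg a))) u)
    (Comp pneg (pplus (Comp a u) (Comp pneg (Comp a u))))"
proof -
  have "peq A NN (Comp (Comp pneg (pplus a (Comp pneg a))) u) (Comp pneg (Comp (pplus a (Comp pneg a)) u))"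
    by (rule peq_assoc) (use a u in blast)+
  also have "peq A NN \<dots> (Comp pneg (pplus (Comp a u) (Comp (Comp pneg a) u)))"
    by (rule peq_arg_cong, blast, rule peq_pplus_comp) (use a u in blast)+
  also have "peq A NN \<dots> (Comp pneg (pplus (Comp a u) (Comp pneg (Comp a u))))"
    by (rule peq_arg_cong, blast, rule peq_arg_cong, blast, rule peq_pair_cong2, (use a u in blast),
        rule peq_assoc) (use a u in blast)+
  finally show ?thesis .
qed

lemma pneg_pplus_pneg_cong:
  "peq A NN a a' \<Longrightarrow> peq A NN (Comp pneg (pplus a (Comp pneg a))) (Comp pneg (pplus a' (Comp pneg a')))"
  by (rule peq_arg_cong, blast, rule pplus_cong, assumption, rule peq_arg_cong, blast, assumption)

lemma pneg_pplus_pneg_generic: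
  "peq (Prod One NN) NN (Comp pneg (pplus (Snd One NN) (Comp pneg (Snd One NN)))) (pzeroA (Prod One NN))"
proof (rule peq_NN_cases)
  let ?P = "Prod One NN" and ?r = "Snd One NN"
  have "peq One NN (Comp (Comp pneg (pplus ?r (Comp pneg ?r))) (zeroA One))
      (Comp pneg (pplus (pzeroA One) (Comp pneg (pzeroA One))))"
    by (rule e_trans, rule pneg_pplus_pneg_comp, blast+, rule pneg_pplus_pneg_cong, rule peq_snd_zeroA)
  also have "peq One NN \<dots> (Comp pneg (Comp pneg (pzeroA One)))"
    by (rule peq_arg_cong, blast, rule pplus_zero_left) blast
  also have "peq One NN \<dots> (pzeroA One)"
    by (rule e_trans, rule peq_arg_cong, blast, rule pneg_zero, rule pneg_ptrueA)
  also have "peq One NN \<dots> (Comp (pzeroA ?P) (zeroA One))"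
    by (rule e_sym, rule peq_pzeroA_comp) blast
  finally show "peq One NN (Comp (Comp pneg (pplus ?r (Comp pneg ?r))) (zeroA One)) (Comp (pzeroA ?P) (zeroA One))" .
  have "peq ?P NN (Comp (Comp pneg (pplus ?r (Comp pneg ?r))) (succA One))
      (Comp pneg (pplus (Comp Succ ?r) (Comp pneg (Comp Succ ?r))))"
    by (rule e_trans, rule pneg_pplus_pneg_comp, blast+, rule pneg_pplus_pneg_cong, rule peq_snd_succA)
  also have "peq ?P NN \<dots> (Comp pneg (pplus (Comp Succ ?r) (pzeroA ?P)))"
    by (rule peq_arg_cong, blast, rule peq_arg_cong, blast, rule peq_pair_cong2, blast,
        rule pneg_succ) blast
  also have "peq ?P NN \<dots> (Comp pneg (Comp Succ ?r))"
    by (rule peq_arg_cong, blast, rule pplus_zero) blast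
  also have "peq ?P NN \<dots> (Comp (pzeroA ?P) (succA One))"
    by (rule e_trans, rule pneg_succ, blast, rule e_sym, rule peq_pzeroA_comp) blast
  finally show "peq ?P NN (Comp (Comp pneg (pplus ?r (Comp pneg ?r))) (succA One)) (Comp (pzeroA ?P) (succA One))" .
qed blast+

lemma pneg_pplus_pneg: "typed p A NN \<Longrightarrow> peq A NN (Comp pneg (pplus p (Comp pneg p))) (pzeroA A)"
proof -
  assume p: "typed p A NN"
  let ?P = "Prod One NN" and ?r = "Snd One NN" and ?u = "Pair (Bang A) p"
  have u: "typed ?u A ?P" using p by blast
  have "peq A NN (Comp pneg (pplus p (Comp pneg p))) (Comp pneg (pplus (Comp ?r ?u) (Comp pneg (Comp ?r ?u))))"
    by (rule pneg_pplus_pneg_cong, rule e_sym, rule peq_snd_bang_pair, rule p)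
  also have "peq A NN \<dots> (Comp (Comp pneg (pplus ?r (Comp pneg ?r))) ?u)"
    by (rule e_sym, rule pneg_pplus_pneg_comp, blast, rule u)
  also have "peq A NN \<dots> (Comp (pzeroA ?P) ?u)"
    by (rule peq_fun_cong, rule pneg_pplus_pneg_generic, rule u)
  also have "peq A NN \<dots> (pzeroA A)" by (rule peq_pzeroA_comp, rule u)
  finally show ?thesis .
qed

lemma psign_comp:
  "peq B NN (Comp psign p) p \<Longrightarrow> typed u A B \<Longrightarrow> peq A NN (Comp psign (Comp p u)) (Comp p u)"
  by (rule e_trans, rule e_assoc, (blast dest: peq_typed)+, rule peq_fun_cong)

\<comment> \<open>\<open>[(p \<or> \<not> w) \<Rightarrow> q]\<close>, with the sign of the antecedent left out\<close>
abbreviation guarded :: "tm \<Rightarrow> tm \<Rightarrow> tm \<Rightarrow> tm" where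
  "guarded p w q \<equiv> Comp psign (pplus (Comp pneg (pplus p (Comp pneg w))) q)"

lemma guarded_graph_comp:
  assumes p: "typed p A NN" and q: "typed q A NN" and w: "typed w A NN"
  shows "peq A NN (Comp (guarded (Comp p (Fst A NN)) (Snd A NN) (Comp q (Fst A NN))) (graph A w))
    (guarded p w q)"
proof -
  let ?W = "graph A w"
  have W: "typed ?W A (Prod A NN)" using w by blast
  have "peq A NN (Comp (guarded (Comp p (Fst A NN)) (Snd A NN) (Comp q (Fst A NN))) ?W)
      (Comp psign (pplus (Comp (Comp pneg (pplus (Comp p (Fst A NN)) (Comp pneg (Snd A NN)))) ?W)
        (Comp (Comp q (Fst A NN)) ?W)))"
    by (rule e_trans, rule peq_assoc, (use p q W in blast)+, rule peq_arg_cong, blast,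
        rule peq_pplus_comp) (use p q W in blast)+
  also have "peq A NN \<dots> (Comp psign (pplus (Comp pneg (pplus (Comp (Comp p (Fst A NN)) ?W)
        (Comp (Comp pneg (Snd A NN)) ?W))) q))"
    by (rule peq_arg_cong, blast, rule pplus_cong, rule e_trans, rule peq_assoc, (use p W in blast)+,
        rule peq_arg_cong, blast, rule peq_pplus_comp, (use p W in blast)+,
        rule peq_fst_graph_comp, rule q, rule w)
  also have "peq A NN \<dots> (guarded p w q)"
    by (rule peq_arg_cong, blast, rule pplus_cong, rule peq_arg_cong, blast, rule pplus_cong,
        rule peq_fst_graph_comp, rule p, rule w, rule peq_snd_graph_comp, blast, rule w,
        rule e_refl) (use q in blast)
  finally show ?thesis .
qed

lemma guarded_self:
  assumes p: "typed p A NN" and q: "typed q A NN" and q_bool: "peq A NN (Comp psign q) q"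
  shows "peq A NN q (guarded p p q)"
proof -
  have "peq A NN q (Comp psign (pplus (pzeroA A) q))"
    by (rule e_sym, rule e_trans, rule peq_arg_cong, blast, rule pplus_zero_left, rule q, rule q_bool)
  also have "peq A NN \<dots> (guarded p p q)"
    by (rule peq_arg_cong, blast, rule pplus_cong, rule e_sym, rule pneg_pplus_pneg, rule p,
        rule e_refl, rule q)
  finally show ?thesis .
qed

lemma guarded_ptrueA:
  assumes p: "typed p A NN" and q: "typed q A NN"
  shows "peq A NN (Comp pimp (Pair p q)) (guarded p (ptrueA A) q)"
proof -
  have "peq A NN (Comp pimp (Pair p q)) (Comp psign (pplus (Comp pneg p) q))"
    by (rule pimp_eq, rule p, rule q)
  also have "peq A NN \<dots> (guarded p (ptrueA A) q)"
    by (rule peq_arg_cong, blast, rule pplus_cong, rule peq_arg_cong, blast, rule e_sym,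
        rule e_trans, rule pplus_cong, rule e_refl, rule p, rule pneg_ptrueA, rule pplus_zero, rule p,
        rule e_refl, rule q)
  finally show ?thesis .
qed

theorem mainTheorem4:
  assumes "typed phi (Prod A NN) NN"
    and "peq (Prod A NN) NN (Comp psign phi) phi"
    and "peq A NN (Comp phi (zeroA A)) (ptrueA A)"
    and "peq (Prod A NN) NN (Comp pimp (Pair phi (Comp phi (succA A)))) (ptrueA (Prod A NN))"
  shows "peq (Prod A NN) NN phi (ptrueA (Prod A NN))"
proof -
  note phi = assms(1) and phi_bool = assms(2) and base = assms(3) and step = assms(4)
  let ?X = "Prod A NN"
  let ?e = "guarded (Comp phi (Fst ?X NN)) (Snd ?X NN) (Comp (Comp phi (succA A)) (Fst ?X NN))"
  have phi_succ: "typed (Comp phi (succA A)) ?X NN" using phi by blast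
  have "peq ?X NN (Comp phi (succA A)) (guarded phi phi (Comp phi (succA A)))"
    using phi phi_succ psign_comp[OF phi_bool] by (rule guarded_self) blast
  also have "peq ?X NN \<dots> (Comp ?e (graph ?X phi))"
    using phi phi_succ phi by (rule guarded_graph_comp[THEN e_sym])
  finally have phi_rec: "peq ?X NN (Comp phi (succA A)) (Comp ?e (graph ?X phi))" .
  have "peq ?X NN (Comp (ptrueA ?X) (succA A)) (Comp pimp (Pair phi (Comp phi (succA A))))"
    by (rule e_trans, rule peq_ptrueA_comp, blast, rule e_sym, rule step)
  also have "peq ?X NN \<dots> (guarded phi (ptrueA ?X) (Comp phi (succA A)))"
    using phi phi_succ by (rule guarded_ptrueA)
  also have "peq ?X NN \<dots> (Comp ?e (graph ?X (ptrueA ?X)))"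
    using phi phi_succ by (rule guarded_graph_comp[THEN e_sym]) blast
  finally have true_rec: "peq ?X NN (Comp (ptrueA ?X) (succA A)) (Comp ?e (graph ?X (ptrueA ?X)))" .
  have zero: "peq A NN (Comp phi (zeroA A)) (Comp (ptrueA ?X) (zeroA A))"
    by (rule e_trans, rule base, rule e_sym, rule peq_ptrueA_comp) blast
  show ?thesis
    by (rule peq_primrec_unique[OF phi _ _ zero phi_rec true_rec]) (use phi in blast)+
qed

end
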